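(* Let $A$ be a commutative noetherian ring and $P$ a projective $A$-module. The map $\nu:\widetilde Q(P)\to\mathcal{Q}(P)$, $\nu(f,p,s)=(f,s)$, induces a bijection $\overline{\nu}:\pi_0(\widetilde Q(P))\to\pi_0(\mathcal{Q}(P))$.
   Context: $P^*=\mathrm{Hom}_A(P,A)$ and $P[T]=P\otimes_AA[T]$. Define $\widetilde Q(P)=\{(f,p,s)\in P^*\oplus P\oplus A: f(p)+s(s-1)=0\}$ and $\mathcal{Q}(P)=\{(f,s)\in P^*\oplus A: s(1-s)\in f(P)\}$; define the same sets over $A[T]$ for $P[T]$. For $\mathcal{F}=\widetilde Q$ or $\mathcal{Q}$, $\pi_0(\mathcal{F}(P))$ is the quotient of $\mathcal{F}(P)$ by the equivalence relation generated by $H(0)\sim H(1)$ for $H(T)\in\mathcal{F}(P[T])$, where $H(t)$ is the specialization $T=t$. *)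

theory Defs
  imports Main "HOL-Computational_Algebra.Polynomial"
begin

definition noetherian_ring :: "'a::comm_ring_1 itself \<Rightarrow> bool" where
  "noetherian_ring _ \<longleftrightarrow>
     (\<forall>I::'a set. module.subspace ((*)) I \<longrightarrow>
        (\<exists>F. finite F \<and> I = module.span ((*)) F))"

text \<open>Projective: the module is a direct summand of a free module, namely the canonical
surjection from the free module on the underlying set of P (finitely supported
functions) onto P admits an A-linear section.\<close>

definition projective_module ::
  "('a::comm_ring_1 \<Rightarrow> 'b::ab_group_add \<Rightarrow> 'b) \<Rightarrow> bool" where
  "projective_module scale \<longleftrightarrow> module scale \<and>
     (\<exists>\<sigma> :: 'b \<Rightarrow> 'b \<Rightarrow> 'a.
        (\<forall>p. finite {x. \<sigma> p x \<noteq> 0}) \<and>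
        (\<forall>p q x. \<sigma> (p + q) x = \<sigma> p x + \<sigma> q x) \<and>
        (\<forall>a p. \<sigma> (scale a p) = (\<lambda>x. a * \<sigma> p x)) \<and>
        (\<forall>p. (\<Sum>x\<in>{x. \<sigma> p x \<noteq> 0}. scale (\<sigma> p x) x) = p))"

text \<open>P[T] = P \<otimes>_A A[T] is represented by polynomials with coefficients in P,
with the natural A[T]-module structure.\<close>

definition polyscale ::
  "('a::comm_ring_1 \<Rightarrow> 'b::ab_group_add \<Rightarrow> 'b) \<Rightarrow> 'a poly \<Rightarrow> 'b poly \<Rightarrow> 'b poly" where
  "polyscale scale q p =
     (\<Sum>i\<le>degree q. \<Sum>j\<le>degree p. monom (scale (coeff q i) (coeff p j)) (i + j))"

definition poly_eval ::
  "('a::comm_ring_1 \<Rightarrow> 'b::ab_group_add \<Rightarrow> 'b) \<Rightarrow> 'b poly \<Rightarrow> 'a \<Rightarrow> 'b" where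
  "poly_eval scale p t = (\<Sum>i\<le>degree p. scale (t ^ i) (coeff p i))"

text \<open>Specialization of F in P[T]^* = Hom_{A[T]}(P[T],A[T]) at T = t:
 the A-linear form p \<mapsto> F(p \<otimes> 1)(t).\<close>

definition dual_eval :: "('b::zero poly \<Rightarrow> 'a::comm_ring_1 poly) \<Rightarrow> 'a \<Rightarrow> 'b \<Rightarrow> 'a" where
  "dual_eval F t = (\<lambda>p. poly (F [:p:]) t)"

definition Qtilde ::
  "('r::comm_ring_1 \<Rightarrow> 'm::ab_group_add \<Rightarrow> 'm) \<Rightarrow> (('m \<Rightarrow> 'r) \<times> 'm \<times> 'r) set" where
  "Qtilde scale = {(f, p, s). module_hom scale ((*)) f \<and> f p + s * (s - 1) = 0}"

definition QQ ::
  "('r::comm_ring_1 \<Rightarrow> 'm::ab_group_add \<Rightarrow> 'm) \<Rightarrow> (('m \<Rightarrow> 'r) \<times> 'r) set" where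
  "QQ scale = {(f, s). module_hom scale ((*)) f \<and> s * (1 - s) \<in> range f}"

definition spec_tilde ::
  "('a::comm_ring_1 \<Rightarrow> 'b::ab_group_add \<Rightarrow> 'b) \<Rightarrow>
   (('b poly \<Rightarrow> 'a poly) \<times> 'b poly \<times> 'a poly) \<Rightarrow> 'a \<Rightarrow> (('b \<Rightarrow> 'a) \<times> 'b \<times> 'a)" where
  "spec_tilde scale H t =
     (case H of (F, p, s) \<Rightarrow> (dual_eval F t, poly_eval scale p t, poly s t))"

definition spec_QQ ::
  "(('b::zero poly \<Rightarrow> 'a::comm_ring_1 poly) \<times> 'a poly) \<Rightarrow> 'a \<Rightarrow> (('b \<Rightarrow> 'a) \<times> 'a)" where
  "spec_QQ H t = (case H of (F, s) \<Rightarrow> (dual_eval F t, poly s t))"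

definition homot_tilde ::
  "('a::comm_ring_1 \<Rightarrow> 'b::ab_group_add \<Rightarrow> 'b) \<Rightarrow> ((('b \<Rightarrow> 'a) \<times> 'b \<times> 'a) \<times> (('b \<Rightarrow> 'a) \<times> 'b \<times> 'a)) set" where
  "homot_tilde scale =
     {(spec_tilde scale H 0, spec_tilde scale H 1) | H. H \<in> Qtilde (polyscale scale)}"

definition homot_QQ ::
  "('a::comm_ring_1 \<Rightarrow> 'b::ab_group_add \<Rightarrow> 'b) \<Rightarrow> ((('b \<Rightarrow> 'a) \<times> 'a) \<times> (('b \<Rightarrow> 'a) \<times> 'a)) set" where
  "homot_QQ scale = {(spec_QQ H 0, spec_QQ H 1) | H. H \<in> QQ (polyscale scale)}"

definition equiv_gen :: "('x \<times> 'x) set \<Rightarrow> ('x \<times> 'x) set" where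
  "equiv_gen R = (R \<union> R\<inverse>)\<^sup>*"

definition pi0_tilde ::
  "('a::comm_ring_1 \<Rightarrow> 'b::ab_group_add \<Rightarrow> 'b) \<Rightarrow> (('b \<Rightarrow> 'a) \<times> 'b \<times> 'a) set set" where
  "pi0_tilde scale = Qtilde scale // equiv_gen (homot_tilde scale)"

definition pi0_QQ ::
  "('a::comm_ring_1 \<Rightarrow> 'b::ab_group_add \<Rightarrow> 'b) \<Rightarrow> (('b \<Rightarrow> 'a) \<times> 'a) set set" where
  "pi0_QQ scale = QQ scale // equiv_gen (homot_QQ scale)"

definition nu :: "(('b \<Rightarrow> 'a) \<times> 'b \<times> 'a) \<Rightarrow> (('b \<Rightarrow> 'a) \<times> 'a)" where
  "nu x = (case x of (f, p, s) \<Rightarrow> (f, s))"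

definition nu_bar ::
  "('a::comm_ring_1 \<Rightarrow> 'b::ab_group_add \<Rightarrow> 'b) \<Rightarrow> (('b \<Rightarrow> 'a) \<times> 'b \<times> 'a) set \<Rightarrow> (('b \<Rightarrow> 'a) \<times> 'a) set" where
  "nu_bar scale X = the_elem ((\<lambda>x. equiv_gen (homot_QQ scale) `` {nu x}) ` X)"

end

theory Submission
  imports Defs
begin

text \<open>Every point (f, s) of \<open>\<Q>(P)\<close> lifts to \<open>\<widetilde>Q(P)\<close> by choosing p with f(p) = s(1 - s), and the
same choice over \<open>A[T]\<close> lifts every elementary homotopy of \<open>\<Q>(P)\<close> to one of \<open>\<widetilde>Q(P)\<close>.
Two points (f, p0, s), (f, p1, s) over the same point differ by an element of ker f, so the
linear path (f, p0 + T(p1 - p0), s) joins them: the fibres of \<open>\<nu>\<close> are connected. A map with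
these three properties induces a bijection on the quotients by the generated equivalences.\<close>

section \<open>Maps between quotients by generated equivalences\<close>

lemma equiv_equiv_gen: "equiv UNIV (equiv_gen R)"
  unfolding equiv_gen_def
  by (intro equivI refl_rtrancl sym_rtrancl trans_rtrancl) (auto simp: sym_def)

lemma equiv_gen_incl: "(x, y) \<in> R \<Longrightarrow> (x, y) \<in> equiv_gen R"
  unfolding equiv_gen_def by auto

lemma equiv_gen_sym: "(x, y) \<in> equiv_gen R \<Longrightarrow> (y, x) \<in> equiv_gen R"
  using equiv_equiv_gen[of R] unfolding equiv_def sym_def by blast

lemma equiv_gen_trans:
  "(x, y) \<in> equiv_gen R \<Longrightarrow> (y, z) \<in> equiv_gen R \<Longrightarrow> (x, z) \<in> equiv_gen R"
  using equiv_equiv_gen[of R] unfolding equiv_def trans_def by blast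

lemma equiv_gen_map:
  assumes "\<And>x y. (x, y) \<in> R \<Longrightarrow> (g x, g y) \<in> S"
    and "(x, y) \<in> equiv_gen R"
  shows "(g x, g y) \<in> equiv_gen S"
  using assms(2) unfolding equiv_gen_def
proof (induction rule: rtrancl_induct)
  case (step y z)
  then have "(g y, g z) \<in> S \<union> S\<inverse>" using assms(1) by auto
  with step.IH show ?case by (rule rtrancl_into_rtrancl)
qed simp

lemma equiv_gen_lift:
  assumes lift_edge: "\<And>u v. (u, v) \<in> S \<Longrightarrow> \<exists>a\<in>A. \<exists>b\<in>A. g a = u \<and> g b = v \<and> (a, b) \<in> R"
    and fibre: "\<And>x y. x \<in> A \<Longrightarrow> y \<in> A \<Longrightarrow> g x = g y \<Longrightarrow> (x, y) \<in> equiv_gen R"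
    and "(g x, w) \<in> equiv_gen S" and "x \<in> A"
  shows "\<exists>x'\<in>A. g x' = w \<and> (x, x') \<in> equiv_gen R"
  using assms(3) unfolding equiv_gen_def[of S]
proof (induction rule: rtrancl_induct)
  case base
  then show ?case using \<open>x \<in> A\<close> by (auto simp: equiv_gen_def)
next
  case (step w w')
  from step.IH obtain x' where x': "x' \<in> A" "g x' = w" "(x, x') \<in> equiv_gen R"
    by blast
  have "\<exists>a\<in>A. \<exists>b\<in>A. g a = w \<and> g b = w' \<and> (a, b) \<in> equiv_gen R"
    using step.hyps(2) lift_edge by (blast intro: equiv_gen_incl equiv_gen_sym)
  then obtain a b where "a \<in> A" "b \<in> A" "g a = w" "g b = w'" "(a, b) \<in> equiv_gen R"
    by blast
  moreover have "(x', a) \<in> equiv_gen R" using fibre x' \<open>a \<in> A\<close> \<open>g a = w\<close> by simp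
  ultimately show ?case using x'(3) by (blast intro: equiv_gen_trans)
qed

lemma bij_betw_quotient_equiv_gen:
  assumes image: "g ` A = B"
    and map_edge: "\<And>x y. (x, y) \<in> R \<Longrightarrow> (g x, g y) \<in> S"
    and lift_edge: "\<And>u v. (u, v) \<in> S \<Longrightarrow> \<exists>a\<in>A. \<exists>b\<in>A. g a = u \<and> g b = v \<and> (a, b) \<in> R"
    and fibre: "\<And>x y. x \<in> A \<Longrightarrow> y \<in> A \<Longrightarrow> g x = g y \<Longrightarrow> (x, y) \<in> equiv_gen R"
  shows "bij_betw (\<lambda>X. the_elem ((\<lambda>x. equiv_gen S `` {g x}) ` X))
           (A // equiv_gen R) (B // equiv_gen S)"
proof -
  let ?R = "equiv_gen R" and ?S = "equiv_gen S"
  let ?g = "\<lambda>X. the_elem ((\<lambda>x. ?S `` {g x}) ` X)"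
  have induced_class: "?g (?R `` {x}) = ?S `` {g x}" for x
  proof -
    have "?S `` {g y} = ?S `` {g x}" if "(x, y) \<in> ?R" for y
      using equiv_class_eq[OF equiv_equiv_gen equiv_gen_map[where g = g, OF map_edge that]] by simp
    moreover have "x \<in> ?R `` {x}" by (simp add: equiv_gen_def)
    ultimately have "(\<lambda>y. ?S `` {g y}) ` (?R `` {x}) = {?S `` {g x}}" by blast
    then show ?thesis by simp
  qed
  have "inj_on ?g (A // ?R)"
  proof (rule inj_onI)
    fix X Y assume "X \<in> A // ?R" "Y \<in> A // ?R" and eq: "?g X = ?g Y"
    then obtain x y where x: "x \<in> A" "X = ?R `` {x}" and y: "y \<in> A" "Y = ?R `` {y}"
      by (auto elim!: quotientE)
    have "(g x, g y) \<in> ?S"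
      using eq by (simp add: x y induced_class eq_equiv_class_iff[OF equiv_equiv_gen])
    then obtain x' where "x' \<in> A" "g x' = g y" "(x, x') \<in> ?R"
      using equiv_gen_lift[OF lift_edge fibre _ x(1)] by blast
    with fibre[of x' y] y(1) have "(x, y) \<in> ?R" by (blast intro: equiv_gen_trans)
    then show "X = Y" by (simp add: x y eq_equiv_class_iff[OF equiv_equiv_gen])
  qed
  moreover have "?g ` (A // ?R) = B // ?S"
    by (simp add: quotient_def image_UN induced_class flip: image)
  ultimately show ?thesis by (simp add: bij_betw_def)
qed

section \<open>The module P[T]\<close>

lemma module_mult: "module ((*) :: 'a::comm_ring_1 \<Rightarrow> 'a \<Rightarrow> 'a)"
  by unfold_locales (simp_all add: algebra_simps)

lemma coeff_polyscale:
  assumes "module scale"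
  shows "coeff (polyscale scale q p) k = (\<Sum>i\<le>k. scale (coeff q i) (coeff p (k - i)))"
proof -
  interpret module scale by fact
  define g where "g i j = scale (coeff q i) (coeff p j)" for i j
  have g0: "g i j = 0" if "i > degree q \<or> j > degree p" for i j
    using that by (auto simp: g_def coeff_eq_0)
  have diag: "(\<Sum>j\<le>degree p. if i + j = k then g i j else 0) = (if i \<le> k then g i (k - i) else 0)"
    for i
  proof (cases "i \<le> k")
    case True
    then have "(\<Sum>j\<le>degree p. if i + j = k then g i j else 0)
        = (\<Sum>j\<le>degree p. if j = k - i then g i j else 0)"
      by (intro sum.cong) auto
    also have "\<dots> = g i (k - i)"
      using g0[of i "k - i"] by auto
    finally show ?thesis using True by simp
  qed simp
  have "coeff (polyscale scale q p) k = (\<Sum>i\<le>degree q. if i \<le> k then g i (k - i) else 0)"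
    unfolding polyscale_def g_def by (simp add: coeff_sum diag[unfolded g_def])
  also have "\<dots> = (\<Sum>i\<le>max (degree q) k. if i \<le> k then g i (k - i) else 0)"
    by (rule sum.mono_neutral_left) (auto simp: g0)
  also have "\<dots> = (\<Sum>i\<le>k. g i (k - i))"
    by (subst sum.mono_neutral_right[of _ "{..k}"]) (auto simp: g0)
  finally show ?thesis by (simp add: g_def)
qed

lemma module_polyscale:
  assumes M: "module scale"
  shows "module (polyscale scale)"
proof -
  interpret module scale by fact
  note cp = coeff_polyscale[OF M]
  show ?thesis
  proof
    fix a :: "'a poly" and x y :: "'b poly"
    show "polyscale scale a (x + y) = polyscale scale a x + polyscale scale a y"
      by (rule poly_eqI) (simp add: cp scale_right_distrib sum.distrib)
  next
    fix a b :: "'a poly" and x :: "'b poly"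
    show "polyscale scale (a + b) x = polyscale scale a x + polyscale scale b x"
      by (rule poly_eqI) (simp add: cp scale_left_distrib sum.distrib)
  next
    fix x :: "'b poly"
    show "polyscale scale 1 x = x"
    proof (rule poly_eqI)
      fix k
      have "(\<Sum>i\<le>k. scale (coeff 1 i) (coeff x (k - i))) = (\<Sum>i\<le>k. if i = 0 then coeff x k else 0)"
        by (intro sum.cong) auto
      then show "coeff (polyscale scale 1 x) k = coeff x k" by (simp add: cp)
    qed
  next
    fix a b :: "'a poly" and x :: "'b poly"
    show "polyscale scale a (polyscale scale b x) = polyscale scale (a * b) x"
    proof (rule poly_eqI)
      fix k
      define g where "g i j = scale (coeff a i * coeff b j) (coeff x (k - i - j))" for i j
      have "coeff (polyscale scale a (polyscale scale b x)) k = (\<Sum>i\<le>k. \<Sum>j\<le>k - i. g i j)"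
        by (simp add: cp g_def scale_sum_right diff_diff_add)
      also have "\<dots> = (\<Sum>(i, j)\<in>Sigma {..k} (\<lambda>i. {..k - i}). g i j)"
        by (rule sum.Sigma) auto
      also have "Sigma {..k} (\<lambda>i. {..k - i}) = {(i, j). i + j \<le> k}" by auto
      also have "(\<Sum>(i, j)\<in>{(i, j). i + j \<le> k}. g i j) = (\<Sum>m\<le>k. \<Sum>i\<le>m. g i (m - i))"
        by (rule sum.triangle_reindex_eq)
      also have "\<dots> = coeff (polyscale scale (a * b) x) k"
        by (simp add: cp coeff_mult scale_sum_left g_def)
      finally show "coeff (polyscale scale a (polyscale scale b x)) k
          = coeff (polyscale scale (a * b) x) k" .
    qed
  qed
qed

lemma polyscale_const:
  assumes "module scale"
  shows "polyscale scale [:a:] p = map_poly (scale a) p"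
proof -
  interpret module scale by fact
  show ?thesis
  proof (rule poly_eqI)
    fix k
    have "(\<Sum>i\<le>k. scale (coeff [:a:] i) (coeff p (k - i)))
        = (\<Sum>i\<le>k. if i = 0 then scale a (coeff p k) else 0)"
      by (intro sum.cong) (auto simp: coeff_pCons split: nat.split)
    then show "coeff (polyscale scale [:a:] p) k = coeff (map_poly (scale a) p) k"
      by (simp add: coeff_polyscale[OF assms] coeff_map_poly)
  qed
qed

lemma polyscale_const_const:
  assumes "module scale"
  shows "polyscale scale [:a:] [:c:] = [:scale a c:]"
proof -
  interpret module scale by fact
  show ?thesis by (simp add: polyscale_const[OF assms] map_poly_pCons)
qed

lemma polyscale_monom_const:
  assumes "module scale"
  shows "polyscale scale (monom 1 i) [:c:] = monom c i"
proof -
  interpret module scale by fact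
  show ?thesis
  proof (rule poly_eqI)
    fix k
    have "(\<Sum>j\<le>k. scale (coeff (monom 1 i) j) (coeff [:c:] (k - j)))
        = (\<Sum>j\<le>k. if j = i then (if k = i then c else 0) else 0)"
      by (intro sum.cong) (auto simp: coeff_pCons split: nat.split)
    then show "coeff (polyscale scale (monom 1 i) [:c:]) k = coeff (monom c i) k"
      by (auto simp: coeff_polyscale[OF assms])
  qed
qed

lemma poly_eval_conv_sum:
  assumes "module scale" and "degree p \<le> n"
  shows "poly_eval scale p t = (\<Sum>i\<le>n. scale (t ^ i) (coeff p i))"
proof -
  interpret module scale by fact
  show ?thesis unfolding poly_eval_def
    by (rule sum.mono_neutral_left) (use assms(2) in \<open>auto simp: coeff_eq_0\<close>)
qed

section \<open>Linear forms on P[T] and their specializations\<close>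

lemma module_hom_polyscale_expand:
  assumes M: "module scale" and "module_hom (polyscale scale) (*) F"
  shows "F p = (\<Sum>i\<le>degree p. monom 1 i * F [:coeff p i:])"
proof -
  interpret module_hom "polyscale scale" "(*)" F by fact
  have "F p = F (\<Sum>i\<le>degree p. polyscale scale (monom 1 i) [:coeff p i:])"
    by (simp add: polyscale_monom_const[OF M] poly_as_sum_of_monoms)
  then show ?thesis by (simp add: sum scale)
qed

lemma module_hom_dual_eval:
  assumes M: "module scale" and "module_hom (polyscale scale) (*) F"
  shows "module_hom scale (*) (dual_eval F t)"
proof -
  interpret module_hom "polyscale scale" "(*)" F by fact
  show ?thesis
    unfolding module_hom_iff
  proof (intro conjI allI)
    show "module scale" "module ((*) :: 'a \<Rightarrow> _)" by (fact M, fact module_mult)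
    fix x y
    show "dual_eval F t (x + y) = dual_eval F t x + dual_eval F t y"
      unfolding dual_eval_def using add[of "[:x:]" "[:y:]"] by simp
  next
    fix c x
    show "dual_eval F t (scale c x) = c * dual_eval F t x"
      unfolding dual_eval_def using scale[of "[:c:]" "[:x:]"]
      by (simp add: polyscale_const_const[OF M])
  qed
qed

lemma dual_eval_poly_eval:
  assumes M: "module scale" and F: "module_hom (polyscale scale) (*) F"
  shows "dual_eval F t (poly_eval scale p t) = poly (F p) t"
proof -
  interpret module_hom "polyscale scale" "(*)" F by fact
  have "dual_eval F t (poly_eval scale p t)
      = poly (F (\<Sum>i\<le>degree p. polyscale scale [:t ^ i:] [:coeff p i:])) t"
    by (simp add: dual_eval_def poly_eval_def sum_to_poly polyscale_const_const[OF M])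
  also have "\<dots> = (\<Sum>i\<le>degree p. t ^ i * poly (F [:coeff p i:]) t)"
    by (simp add: sum scale poly_sum)
  also have "\<dots> = poly (F p) t"
    by (subst module_hom_polyscale_expand[OF M F]) (simp add: poly_sum poly_monom)
  finally show ?thesis .
qed

lemma module_hom_map_poly:
  assumes M: "module scale" and "module_hom scale (*) f"
  shows "module_hom (polyscale scale) (*) (map_poly f)"
proof -
  interpret module_hom scale "(*)" f by fact
  show ?thesis unfolding module_hom_iff
  proof (intro conjI allI)
    show "module (polyscale scale)" "module ((*) :: 'a poly \<Rightarrow> _)"
      by (fact module_polyscale[OF M], fact module_mult)
    fix x y
    show "map_poly f (x + y) = map_poly f x + map_poly f y"
      by (rule poly_eqI) (simp add: coeff_map_poly add)
  next
    fix c x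
    show "map_poly f (polyscale scale c x) = c * map_poly f x"
      by (rule poly_eqI) (simp add: coeff_map_poly coeff_polyscale[OF M] coeff_mult sum scale)
  qed
qed

lemma dual_eval_map_poly: "f 0 = 0 \<Longrightarrow> dual_eval (map_poly f) t = f"
  by (rule ext) (simp add: dual_eval_def map_poly_pCons)

section \<open>The map \<open>\<nu>\<close>\<close>

lemma spec_tilde_in_Qtilde:
  assumes M: "module scale" and "H \<in> Qtilde (polyscale scale)"
  shows "spec_tilde scale H t \<in> Qtilde scale"
proof -
  obtain F p S where H: "H = (F, p, S)" by (cases H)
  have F: "module_hom (polyscale scale) (*) F" and "F p + S * (S - 1) = 0"
    using assms(2) by (auto simp: Qtilde_def H)
  then have "poly (F p + S * (S - 1)) t = 0" by simp
  then show ?thesis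
    by (simp add: Qtilde_def spec_tilde_def H module_hom_dual_eval[OF M F] dual_eval_poly_eval[OF M F])
qed

lemma mem_Qtilde_iff: "(f, p, s) \<in> Qtilde scale \<longleftrightarrow> (f, s) \<in> QQ scale \<and> f p = s * (1 - s)"
proof -
  have "f p + s * (s - 1) = f p - s * (1 - s)" by (simp add: algebra_simps)
  then show ?thesis by (auto simp: Qtilde_def QQ_def intro: range_eqI[of _ _ p])
qed

lemma image_nu_Qtilde: "nu ` Qtilde scale = QQ scale"
proof
  show "nu ` Qtilde scale \<subseteq> QQ scale"
    by (auto simp: nu_def mem_Qtilde_iff)
  show "QQ scale \<subseteq> nu ` Qtilde scale"
  proof
    fix w assume "w \<in> QQ scale"
    moreover obtain f s where w: "w = (f, s)" by (cases w)
    ultimately obtain p where "f p = s * (1 - s)" by (auto simp: QQ_def)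
    with \<open>w \<in> QQ scale\<close> have "(f, p, s) \<in> Qtilde scale" by (simp add: w mem_Qtilde_iff)
    then show "w \<in> nu ` Qtilde scale" by (rule image_eqI[rotated]) (simp add: w nu_def)
  qed
qed

lemma nu_homot_tilde:
  assumes "(x, y) \<in> homot_tilde scale"
  shows "(nu x, nu y) \<in> homot_QQ scale"
proof -
  obtain H where H: "H \<in> Qtilde (polyscale scale)"
    and xy: "x = spec_tilde scale H 0" "y = spec_tilde scale H 1"
    using assms unfolding homot_tilde_def by blast
  obtain F p S where "H = (F, p, S)" by (cases H)
  with H xy have "(F, S) \<in> QQ (polyscale scale)" "nu x = spec_QQ (F, S) 0" "nu y = spec_QQ (F, S) 1"
    by (simp_all add: mem_Qtilde_iff nu_def spec_tilde_def spec_QQ_def)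
  then show ?thesis unfolding homot_QQ_def by blast
qed

lemma homot_QQ_lift:
  assumes M: "module scale" and "(u, v) \<in> homot_QQ scale"
  shows "\<exists>a\<in>Qtilde scale. \<exists>b\<in>Qtilde scale. nu a = u \<and> nu b = v \<and> (a, b) \<in> homot_tilde scale"
proof -
  obtain G where G: "G \<in> QQ (polyscale scale)"
    and uv: "u = spec_QQ G 0" "v = spec_QQ G 1"
    using assms(2) unfolding homot_QQ_def by blast
  obtain F S where FS: "G = (F, S)" by (cases G)
  with G obtain p where H: "(F, p, S) \<in> Qtilde (polyscale scale)"
    by (auto simp: QQ_def mem_Qtilde_iff)
  let ?a = "spec_tilde scale (F, p, S) 0" and ?b = "spec_tilde scale (F, p, S) 1"
  have "?a \<in> Qtilde scale" "?b \<in> Qtilde scale"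
    by (rule spec_tilde_in_Qtilde[OF M H])+
  moreover have "nu ?a = u" "nu ?b = v"
    by (simp_all add: uv FS nu_def spec_tilde_def spec_QQ_def)
  moreover have "(?a, ?b) \<in> homot_tilde scale"
    unfolding homot_tilde_def using H by blast
  ultimately show ?thesis by blast
qed

lemma homot_tilde_linear_path:
  assumes M: "module scale" and "(f, p0, s) \<in> Qtilde scale" and "f p1 = f p0"
  shows "((f, p0, s), (f, p1, s)) \<in> homot_tilde scale"
proof -
  have f: "module_hom scale (*) f" and eq: "f p0 + s * (s - 1) = 0"
    using assms(2) by (simp_all add: Qtilde_def)
  interpret module_hom scale "(*)" f by fact
  define H where "H = (map_poly f, [:p0, p1 - p0:], [:s:])"
  have "f (p1 - p0) = 0" using assms(3) by (simp add: diff)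
  then have "map_poly f [:p0, p1 - p0:] = [:f p0:]"
    by (rule_tac poly_eqI) (simp add: coeff_map_poly coeff_pCons split: nat.split)
  then have "map_poly f [:p0, p1 - p0:] + [:s:] * ([:s:] - 1) = [:f p0 + s * (s - 1):]"
    by (simp add: algebra_simps one_pCons)
  then have H: "H \<in> Qtilde (polyscale scale)"
    using eq by (simp add: H_def Qtilde_def module_hom_map_poly[OF M f])
  have "poly_eval scale [:p0, p1 - p0:] t = scale 1 p0 + scale t (p1 - p0)" for t
    by (subst poly_eval_conv_sum[OF M, where n=1]) (simp_all add: degree_pCons_le)
  then have "spec_tilde scale H 0 = (f, p0, s)" "spec_tilde scale H 1 = (f, p1, s)"
    by (simp_all add: spec_tilde_def H_def dual_eval_map_poly)
  then have "((f, p0, s), (f, p1, s)) = (spec_tilde scale H 0, spec_tilde scale H 1)" by simp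
  with H show ?thesis unfolding homot_tilde_def by blast
qed

lemma Qtilde_fibre_connected:
  assumes M: "module scale" and "x \<in> Qtilde scale" "y \<in> Qtilde scale" and "nu x = nu y"
  shows "(x, y) \<in> equiv_gen (homot_tilde scale)"
proof -
  obtain f p s q where xy: "x = (f, p, s)" "y = (f, q, s)"
    using assms(4) by (cases x; cases y) (auto simp: nu_def)
  have "f q = f p"
    using assms(2,3) by (simp add: xy mem_Qtilde_iff)
  from homot_tilde_linear_path[OF M assms(2)[unfolded xy] this] show ?thesis
    by (simp add: xy equiv_gen_incl)
qed

theorem theorem2p7:
  fixes scale :: "'a::comm_ring_1 \<Rightarrow> 'b::ab_group_add \<Rightarrow> 'b"
  assumes "noetherian_ring TYPE('a)"
    and "projective_module scale"
  shows "(\<forall>x\<in>Qtilde scale. nu x \<in> QQ scale)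
    \<and> (\<forall>x\<in>Qtilde scale. \<forall>y\<in>Qtilde scale.
          (x, y) \<in> equiv_gen (homot_tilde scale) \<longrightarrow>
          (nu x, nu y) \<in> equiv_gen (homot_QQ scale))
    \<and> bij_betw (nu_bar scale) (pi0_tilde scale) (pi0_QQ scale)"
proof -
  have M: "module scale" using assms(2) by (simp add: projective_module_def)
  have "bij_betw (nu_bar scale) (pi0_tilde scale) (pi0_QQ scale)"
    unfolding nu_bar_def pi0_tilde_def pi0_QQ_def
    by (rule bij_betw_quotient_equiv_gen[OF image_nu_Qtilde nu_homot_tilde
          homot_QQ_lift[OF M] Qtilde_fibre_connected[OF M]])
  moreover have "nu x \<in> QQ scale" if "x \<in> Qtilde scale" for x
    using that image_nu_Qtilde by blast
  moreover have "(nu x, nu y) \<in> equiv_gen (homot_QQ scale)"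
    if "(x, y) \<in> equiv_gen (homot_tilde scale)" for x y
    using equiv_gen_map[where g = nu, OF nu_homot_tilde that] .
  ultimately show ?thesis by blast
qed

end
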